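(* For all integers $n,k\ge1$, $$\frac{L_3(k)}{n^{(2k+1)/2}}<\sum_{t=k}^\infty\frac{g_{o,1}(t)}{n^{(2t+1)/2}}<\frac{U_3(k)}{n^{(2k+1)/2}},$$ where $L_3(k)=\left(\frac{19}{10}\alpha\sinh\alpha-\frac{109}{10}\cosh\alpha\sqrt{k+1}-\frac{23}{10\sqrt{k+1}}\right)24^{-(2k+1)/2}$ and $U_3(k)=\left(2\alpha\sinh\alpha+\frac{33}{10\sqrt{k+1}}\right)24^{-(2k+1)/2}$.
   Context: $\alpha=\pi/6$. $(a)_m=a(a+1)\cdots(a+m-1)$ is the rising factorial ($(a)_0=1$); $\binom{x}{m}=x(x-1)\cdots(x-m+1)/m!$ for $m\ge1$, $\binom{x}{0}=1$. For $t\ge2$, $$S_3(t)=\sum_{s=1}^t\frac{(1/2-s)_{s+1}\binom{-3/2}{t-s}}{s}\sum_{u=1}^s\frac{(-1)^u(-s)_u}{(s+u)!\,(2u-1)!}\left(\frac{\pi^2}{36}\right)^u,$$ and $g_{o,1}(t)=-\frac{6}{\pi\sqrt{24}}\frac{(-1)^t}{24^t}\left(\binom{-3/2}{t}+S_3(t)\right)$ for $t\ge2$, $g_{o,1}(1)=-\frac{432+\pi^2}{2304\sqrt6\,\pi}$, $g_{o,1}(0)=-\frac{6}{\pi\sqrt{24}}$. *)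

theory Defs
  imports Complex_Main
begin

definition alpha :: real where "alpha = pi / 6"

definition S3 :: "nat \<Rightarrow> real" where
  "S3 t = (\<Sum>s=1..t. pochhammer (1/2 - real s) (s+1) * ((-3/2) gchoose (t - s)) / real s *
      (\<Sum>u=1..s. (-1)^u * pochhammer (- real s) u / (fact (s+u) * fact (2*u-1)) * (pi^2/36)^u))"

definition g_o1 :: "nat \<Rightarrow> real" where
  "g_o1 t = (if t = 0 then - 6 / (pi * sqrt 24)
             else if t = 1 then - (432 + pi^2) / (2304 * sqrt 6 * pi)
             else - 6 / (pi * sqrt 24) * ((-1)^t / 24^t) * (((-3/2) gchoose t) + S3 t))"

definition L3 :: "nat \<Rightarrow> real" where
  "L3 k = (19/10 * alpha * sinh alpha - 109/10 * cosh alpha * sqrt (real k + 1)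
           - 23 / (10 * sqrt (real k + 1))) * 24 powr (- (2 * real k + 1) / 2)"

definition U3 :: "nat \<Rightarrow> real" where
  "U3 k = (2 * alpha * sinh alpha + 33 / (10 * sqrt (real k + 1))) * 24 powr (- (2 * real k + 1) / 2)"

end

theory Submission
  imports Defs
begin

text \<open>
  Write \<open>Q t = (3/2)\<^sub>t / t! = (-1)\<^sup>t binom(-3/2, t)\<close>. Up to the sign \<open>(-1)\<^sup>t\<close>, every
  summand of \<open>S\<^sub>3(t)\<close> is nonnegative, and bounding the inner \<open>u\<close>-sum by \<open>s/(s+1)!\<close> turns the
  \<open>s\<close>-sum into a telescoping sum of \<open>(1/2)\<^sub>s/s!\<close>; hence \<open>0 \<le> (-1)\<^sup>t S\<^sub>3(t) \<le> Q t / 2\<close>. So every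
  \<open>g\<^sub>o\<^sub>,\<^sub>1(t)\<close> is nonpositive with \<open>|g\<^sub>o\<^sub>,\<^sub>1(t)| \<le> 9 Q t / (\<pi> \<surd>24 24\<^sup>t)\<close>. As \<open>Q (k+i) \<le> (3/2)\<^sup>i Q k\<close>,
  the tail series is dominated by a geometric series of ratio \<open>1/16\<close>, which places it between
  \<open>-(16/15)\<cdot>9 Q k / (\<pi> \<surd>24 (24n)\<^sup>k \<surd>n)\<close> and \<open>0\<close>. Finally \<open>U\<^sub>3(k) > 0\<close>, and \<open>Q k \<le> 2\<surd>(k+1)\<close>
  pushes \<open>L\<^sub>3(k)\<close> below the lower end.
\<close>

definition rising_ratio :: "real \<Rightarrow> nat \<Rightarrow> real" where
  "rising_ratio a m = pochhammer a m / fact m"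

lemma gbinomial_minus_eq_rising_ratio: "(- a) gchoose m = (-1) ^ m * rising_ratio a m"
  unfolding rising_ratio_def gbinomial_pochhammer by simp

lemma gbinomial_minus_three_halves: "(-3/2) gchoose m = (-1) ^ m * rising_ratio (3/2) m"
  using gbinomial_minus_eq_rising_ratio[of "3/2" m] by simp

lemma rising_ratio_0 [simp]: "rising_ratio a 0 = 1"
  by (simp add: rising_ratio_def)

lemma rising_ratio_Suc: "rising_ratio a (Suc m) = rising_ratio a m * (real m + a) / (real m + 1)"
  unfolding rising_ratio_def by (simp add: pochhammer_Suc field_simps)

lemma rising_ratio_pos: "0 < a \<Longrightarrow> 0 < rising_ratio a m"
  unfolding rising_ratio_def by (simp add: pochhammer_pos)

lemma rising_ratio_mono:
  assumes "1 \<le> a" "m \<le> m'"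
  shows "rising_ratio a m \<le> rising_ratio a m'"
proof -
  have "rising_ratio a m \<le> rising_ratio a (Suc m)" for m
    using assms(1) rising_ratio_pos[of a m] unfolding rising_ratio_Suc by (simp add: field_simps)
  then show ?thesis
    using assms(2) by (rule lift_Suc_mono_le)
qed

lemma rising_ratio_le_geometric:
  assumes "1 \<le> a"
  shows "rising_ratio a (m + i) \<le> rising_ratio a m * a ^ i"
proof (induction i)
  case (Suc i)
  have "(real (m + i) + a) / (real (m + i) + 1) \<le> a"
    using assms mult_right_mono[of 1 a "real (m + i)"] by (simp add: divide_le_eq algebra_simps)
  then have "rising_ratio a (m + i) * ((real (m + i) + a) / (real (m + i) + 1))
      \<le> rising_ratio a (m + i) * a"
    using assms rising_ratio_pos[of a "m + i"] by (intro mult_left_mono) auto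
  then have "rising_ratio a (Suc (m + i)) \<le> rising_ratio a (m + i) * a"
    unfolding rising_ratio_Suc by simp
  with Suc show ?case
    using assms by (simp add: mult_right_mono order_trans)
qed simp

lemma rising_ratio_three_halves_le_sqrt: "rising_ratio (3/2) k \<le> 2 * sqrt (real k + 1)"
proof -
  have sq: "(rising_ratio (3/2) k)\<^sup>2 \<le> (4 * real k + 3) / 3"
  proof (induction k)
    case (Suc k)
    have "(rising_ratio (3/2) (Suc k))\<^sup>2 = (rising_ratio (3/2) k)\<^sup>2 * (real k + 3/2)\<^sup>2 / (real k + 1)\<^sup>2"
      unfolding rising_ratio_Suc by (simp add: power_mult_distrib power_divide)
    also have "\<dots> \<le> (4 * real k + 3) / 3 * (real k + 3/2)\<^sup>2 / (real k + 1)\<^sup>2"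
      using Suc by (intro divide_right_mono mult_right_mono) auto
    also have "\<dots> = (4 * real k + 3) * (real k + 3/2)\<^sup>2 / (3 * (real k + 1)\<^sup>2)"
      by simp
    also have "\<dots> \<le> (4 * real k + 7) * (real k + 1)\<^sup>2 / (3 * (real k + 1)\<^sup>2)"
      by (intro divide_right_mono) (simp_all add: power2_eq_square algebra_simps)
    also have "\<dots> = (4 * real (Suc k) + 3) / 3"
      by simp
    finally show ?case .
  qed simp
  have "rising_ratio (3/2) k = sqrt ((rising_ratio (3/2) k)\<^sup>2)"
    using rising_ratio_pos[of "3/2" k] by simp
  also have "\<dots> \<le> sqrt (4 * (real k + 1))"
    using sq by (intro real_sqrt_le_mono) simp
  also have "\<dots> = 2 * sqrt (real k + 1)"
    by (subst real_sqrt_mult) simp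
  finally show ?thesis .
qed

lemma rising_ratio_half_diff:
  "rising_ratio (1/2) s - rising_ratio (1/2) (Suc s) = pochhammer (1/2) s / (2 * fact (Suc s))"
proof -
  have "rising_ratio (1/2) s - rising_ratio (1/2) (Suc s) = rising_ratio (1/2) s / (2 * (real s + 1))"
    unfolding rising_ratio_Suc by (simp add: field_simps)
  then show ?thesis
    unfolding rising_ratio_def fact_Suc by (simp add: field_simps)
qed

lemma pochhammer_half_minus:
  "pochhammer (1/2 - real s) (s + 1) = (-1) ^ s * pochhammer (1/2) s / (2 :: real)"
proof -
  have "pochhammer (1/2 - real s) (s + 1) = (-1) ^ (s + 1) * pochhammer (- 1/2 :: real) (s + 1)"
    using pochhammer_minus[of "real s - 1/2" "s + 1"] by simp
  also have "pochhammer (- 1/2 :: real) (s + 1) = - 1/2 * pochhammer (1/2) s"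
    by (simp add: pochhammer_rec)
  finally show ?thesis by simp
qed

lemma suminf_bounds_geometric_majorant:
  fixes f :: "nat \<Rightarrow> real"
  assumes nonpos: "\<And>i. f i \<le> 0" and majorant: "\<And>i. - f i \<le> M * r ^ i"
    and "0 \<le> r" "r < 1"
  shows "summable f" "- (M / (1 - r)) \<le> suminf f" "suminf f \<le> 0"
proof -
  have "(\<lambda>i. M * r ^ i) sums (M * (1 / (1 - r)))"
    using assms(3,4) by (intro sums_mult geometric_sums) simp
  then have geometric: "(\<lambda>i. M * r ^ i) sums (M / (1 - r))"
    by simp
  show "summable f"
  proof (rule summable_comparison_test)
    have "norm (f i) \<le> M * r ^ i" for i
      using nonpos[of i] majorant[of i] by simp
    then show "\<exists>N. \<forall>i\<ge>N. norm (f i) \<le> M * r ^ i"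
      by blast
    show "summable (\<lambda>i. M * r ^ i)"
      using geometric by (rule sums_summable)
  qed
  then have "f sums suminf f"
    by (rule summable_sums)
  show "- (M / (1 - r)) \<le> suminf f"
    using majorant by (intro sums_le[OF _ sums_minus[OF geometric] \<open>f sums suminf f\<close>])
      (simp add: minus_le_iff)
  show "suminf f \<le> 0"
    using sums_le[OF nonpos \<open>f sums suminf f\<close> sums_zero] .
qed

lemma powr_odd_half: "0 < x \<Longrightarrow> x powr ((2 * real k + 1) / 2) = x ^ k * sqrt x"
proof -
  assume "0 < x"
  have "x powr ((2 * real k + 1) / 2) = x powr real k * x powr (1/2)"
    by (simp add: add_divide_distrib flip: powr_add)
  then show ?thesis
    using \<open>0 < x\<close> by (simp add: powr_realpow powr_half_sqrt)
qed

lemma powr_minus_odd_half: "0 < x \<Longrightarrow> x powr (- (2 * real k + 1) / 2) = 1 / (x ^ k * sqrt x)"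
  unfolding minus_divide_left[symmetric] powr_minus_divide by (simp add: powr_odd_half)

lemma pi_squared_le_16: "pi\<^sup>2 \<le> 16"
proof -
  have "pi\<^sup>2 \<le> (4::real)\<^sup>2"
    using pi_less_4 pi_gt_zero by (intro power_mono) auto
  then show ?thesis by simp
qed

text \<open>The quotient below equals \<open>s! / ((s-u)! (s+u)!)\<close>, which decreases in \<open>u\<close>.\<close>

lemma signed_pochhammer_over_fact_bounds:
  assumes "1 \<le> u" "u \<le> s"
  shows "0 \<le> (-1) ^ u * pochhammer (- real s) u / fact (s + u)
    \<and> (-1) ^ u * pochhammer (- real s) u / fact (s + u) \<le> real s / fact (s + 1)"
  using assms(1)
proof (induction rule: dec_induct)
  case base
  show ?case by simp
next
  case (step u)
  define c where "c = (-1) ^ u * pochhammer (- real s) u / fact (s + u)"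
  define r where "r = (real s - real u) / (real s + real u + 1)"
  have r: "0 \<le> r" "r \<le> 1"
    using step.hyps(2) assms(2) unfolding r_def by (simp_all add: divide_le_eq)
  have c: "0 \<le> c" "c \<le> real s / fact (s + 1)"
    using step.IH unfolding c_def by auto
  have "(-1) ^ Suc u * pochhammer (- real s) (Suc u) / fact (s + Suc u) = c * r"
    unfolding c_def r_def by (simp add: pochhammer_Suc field_simps)
  moreover have "c * r \<le> c"
    using c r by (intro mult_left_le)
  ultimately show ?case
    using c r by simp
qed

definition S3_inner :: "nat \<Rightarrow> real" where
  "S3_inner s = (\<Sum>u=1..s. (-1) ^ u * pochhammer (- real s) u / (fact (s + u) * fact (2 * u - 1))
      * (pi\<^sup>2 / 36) ^ u)"

lemma S3_eq_S3_inner: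
  "S3 t = (\<Sum>s=1..t. pochhammer (1/2 - real s) (s + 1) * ((-3/2) gchoose (t - s)) / real s * S3_inner s)"
  unfolding S3_def S3_inner_def by simp

lemma S3_inner_bounds: "0 \<le> S3_inner s" "S3_inner s \<le> real s / fact (s + 1)"
proof -
  define x :: real where "x = pi\<^sup>2 / 36"
  have x: "0 \<le> x" "x \<le> 1/2"
    unfolding x_def using pi_squared_le_16 by simp_all
  have term_bounds: "0 \<le> (-1) ^ u * pochhammer (- real s) u / (fact (s + u) * fact (2 * u - 1)) * x ^ u
    \<and> (-1) ^ u * pochhammer (- real s) u / (fact (s + u) * fact (2 * u - 1)) * x ^ u
        \<le> real s / fact (s + 1) * (1/2) ^ u"
    if "u \<in> {1..s}" for u
  proof -
    define c where "c = (-1) ^ u * pochhammer (- real s) u / fact (s + u)"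
    have c: "0 \<le> c" "c \<le> real s / fact (s + 1)"
      using signed_pochhammer_over_fact_bounds[of u s] that unfolding c_def by auto
    have "x ^ u / fact (2 * u - 1) \<le> x ^ u / 1"
      using x by (intro divide_left_mono) auto
    also have "\<dots> \<le> (1/2) ^ u"
      using x by (simp add: power_mono)
    finally have "c * (x ^ u / fact (2 * u - 1)) \<le> real s / fact (s + 1) * (1/2) ^ u"
      using c x by (intro mult_mono) auto
    moreover have "0 \<le> c * (x ^ u / fact (2 * u - 1))"
      using c x by simp
    moreover have "(-1) ^ u * pochhammer (- real s) u / (fact (s + u) * fact (2 * u - 1)) * x ^ u
        = c * (x ^ u / fact (2 * u - 1))"
      unfolding c_def by (simp add: field_simps)
    ultimately show ?thesis by simp
  qed
  show "0 \<le> S3_inner s"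
    unfolding S3_inner_def x_def[symmetric] using term_bounds by (intro sum_nonneg) blast
  have geometric: "(\<Sum>u=1..s. (1/2::real) ^ u) = 1 - (1/2) ^ s"
    by (induction s) (simp_all add: atLeastAtMostSuc_conv)
  have "S3_inner s \<le> (\<Sum>u=1..s. real s / fact (s + 1) * (1/2) ^ u)"
    unfolding S3_inner_def x_def[symmetric] using term_bounds by (intro sum_mono) blast
  also have "\<dots> = real s / fact (s + 1) * (\<Sum>u=1..s. (1/2) ^ u)"
    by (simp add: sum_distrib_left)
  also have "\<dots> \<le> real s / fact (s + 1)"
    unfolding geometric by (intro mult_left_le) auto
  finally show "S3_inner s \<le> real s / fact (s + 1)" .
qed

lemma S3_summand_bounds:
  assumes "1 \<le> s" "s \<le> t"
  defines "y \<equiv> (-1) ^ t * (pochhammer (1/2 - real s) (s + 1) * ((-3/2) gchoose (t - s)) / real s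
                 * S3_inner s)"
  shows "0 \<le> y" "y \<le> rising_ratio (3/2) t * (rising_ratio (1/2) s - rising_ratio (1/2) (Suc s))"
proof -
  define p where "p = pochhammer (1/2) s / (2 * real s)"
  have p: "0 \<le> p"
    unfolding p_def by (simp add: pochhammer_pos less_imp_le)
  have "(-1::real) ^ t * ((-1) ^ s * (-1) ^ (t - s)) = 1"
    using assms(2) by (simp flip: power_add power_mult_distrib)
  then have y_eq: "y = p * (rising_ratio (3/2) (t - s) * S3_inner s)"
    unfolding y_def p_def pochhammer_half_minus gbinomial_minus_three_halves
    by (simp add: field_simps)
  have q: "0 \<le> rising_ratio (3/2) (t - s)" "rising_ratio (3/2) (t - s) \<le> rising_ratio (3/2) t"
    using rising_ratio_pos[of "3/2" "t - s"] rising_ratio_mono[of "3/2" "t - s" t] by auto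
  show "0 \<le> y"
    unfolding y_eq using p q S3_inner_bounds(1) by simp
  have "y \<le> p * (rising_ratio (3/2) t * (real s / fact (s + 1)))"
    unfolding y_eq using p q S3_inner_bounds
    by (intro mult_left_mono mult_mono) auto
  also have "\<dots> = rising_ratio (3/2) t * (rising_ratio (1/2) s - rising_ratio (1/2) (Suc s))"
    unfolding rising_ratio_half_diff p_def using assms(1) by (simp add: field_simps del: fact_Suc)
  finally show "y \<le> rising_ratio (3/2) t * (rising_ratio (1/2) s - rising_ratio (1/2) (Suc s))" .
qed

lemma S3_bounds: "0 \<le> (-1) ^ t * S3 t" "(-1) ^ t * S3 t \<le> rising_ratio (3/2) t / 2"
proof -
  have signed_S3: "(-1) ^ t * S3 t = (\<Sum>s=1..t. (-1) ^ t * (pochhammer (1/2 - real s) (s + 1)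
      * ((-3/2) gchoose (t - s)) / real s * S3_inner s))"
    unfolding S3_eq_S3_inner sum_distrib_left ..
  show "0 \<le> (-1) ^ t * S3 t"
    unfolding signed_S3 using S3_summand_bounds(1) by (intro sum_nonneg) auto
  have "(-1) ^ t * S3 t
      \<le> (\<Sum>s=1..t. rising_ratio (3/2) t * (rising_ratio (1/2) s - rising_ratio (1/2) (Suc s)))"
    unfolding signed_S3 using S3_summand_bounds(2) by (intro sum_mono) auto
  also have "\<dots> = rising_ratio (3/2) t * (rising_ratio (1/2) 1 - rising_ratio (1/2) (Suc t))"
    using sum_Suc_diff[of 1 t "\<lambda>s. - rising_ratio (1/2) s"] by (simp flip: sum_distrib_left)
  also have "\<dots> \<le> rising_ratio (3/2) t / 2"
  proof -
    have half: "rising_ratio (1/2) 1 = 1/2"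
      by (simp add: rising_ratio_def)
    have "0 < rising_ratio (3/2) t * rising_ratio (1/2) (Suc t)"
      using rising_ratio_pos[of "3/2" t] rising_ratio_pos[of "1/2" "Suc t"] by simp
    then show ?thesis
      unfolding half by (simp add: right_diff_distrib)
  qed
  finally show "(-1) ^ t * S3 t \<le> rising_ratio (3/2) t / 2" .
qed

lemma g_o1_eq:
  assumes "2 \<le> t"
  shows "g_o1 t = - 6 / (pi * sqrt 24) / 24 ^ t * (rising_ratio (3/2) t + (-1) ^ t * S3 t)"
proof -
  have "(-1) ^ t * ((-3/2) gchoose t) = rising_ratio (3/2) t"
    unfolding gbinomial_minus_three_halves by (simp flip: power_mult_distrib)
  then show ?thesis
    using assms by (simp add: g_o1_def field_simps)
qed

lemma g_o1_bounds: "g_o1 t \<le> 0" "- g_o1 t \<le> 9 / (pi * sqrt 24) * rising_ratio (3/2) t / 24 ^ t"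
proof -
  consider "t = 0" | "t = 1" | "2 \<le> t"
    by linarith
  then have "g_o1 t \<le> 0 \<and> - g_o1 t \<le> 9 / (pi * sqrt 24) * rising_ratio (3/2) t / 24 ^ t"
  proof cases
    case 1
    then show ?thesis
      by (simp add: g_o1_def divide_right_mono)
  next
    case 2
    define x where "x = (432 + pi\<^sup>2) / (2304 * sqrt 6 * pi)"
    have "x \<le> 648 / (2304 * sqrt 6 * pi)"
      unfolding x_def using pi_squared_le_16 by (intro divide_right_mono) auto
    moreover have "sqrt 24 = 2 * sqrt (6::real)"
      using real_sqrt_mult[of 4 6] by simp
    then have "9 / (pi * sqrt 24) * rising_ratio (3/2) t / 24 ^ t = 648 / (2304 * sqrt 6 * pi)"
      unfolding 2 by (simp add: rising_ratio_def field_simps)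
    moreover have "g_o1 t = - x" "0 \<le> x"
      unfolding x_def using 2 by (simp_all add: g_o1_def minus_divide_left)
    ultimately show ?thesis
      by linarith
  next
    case 3
    define w where "w = rising_ratio (3/2) t + (-1) ^ t * S3 t"
    define c where "c = 6 / (pi * sqrt 24) / 24 ^ t"
    have w: "0 \<le> w" "w \<le> 3/2 * rising_ratio (3/2) t"
      unfolding w_def using S3_bounds[of t] rising_ratio_pos[of "3/2" t] by simp_all
    have c: "0 \<le> c"
      unfolding c_def by simp
    have "- g_o1 t = c * w"
      using g_o1_eq[OF 3] unfolding w_def c_def by simp
    moreover have "0 \<le> c * w"
      using c w by simp
    moreover have "c * w \<le> c * (3/2 * rising_ratio (3/2) t)"
      using w(2) c by (rule mult_left_mono)
    moreover have "c * (3/2 * rising_ratio (3/2) t) = 9 / (pi * sqrt 24) * rising_ratio (3/2) t / 24 ^ t"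
      unfolding c_def by simp
    ultimately show ?thesis
      by linarith
  qed
  then show "g_o1 t \<le> 0" "- g_o1 t \<le> 9 / (pi * sqrt 24) * rising_ratio (3/2) t / 24 ^ t"
    by auto
qed

lemma g_o1_tail_bounds:
  fixes n k :: nat
  assumes "1 \<le> n"
  defines "f \<equiv> \<lambda>i. g_o1 (i + k) / (real n ^ (i + k) * sqrt n)"
  shows "summable f"
    and "- (48 / (5 * pi * sqrt 24)) * rising_ratio (3/2) k / (24 ^ k * (real n ^ k * sqrt n))
          \<le> suminf f"
    and "suminf f \<le> 0"
proof -
  define C where "C = 9 / (pi * sqrt 24)"
  define D where "D = real n ^ k * sqrt n"
  define M where "M = C * rising_ratio (3/2) k / 24 ^ k / D"
  have D: "0 < D"
    unfolding D_def using assms(1) by simp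
  have D_le: "D \<le> real n ^ (i + k) * sqrt n" for i
    unfolding D_def using assms(1) by (simp add: power_increasing mult_right_mono)
  have nonpos: "f i \<le> 0" for i
    unfolding f_def using g_o1_bounds(1)[of "i + k"] assms by (simp add: divide_nonpos_pos)
  have "- f i \<le> M * (1/16) ^ i" for i
  proof -
    have g: "0 \<le> - g_o1 (i + k)" "- g_o1 (i + k) \<le> C * rising_ratio (3/2) (k + i) / 24 ^ (i + k)"
      using g_o1_bounds[of "i + k"] unfolding C_def by (simp_all add: add.commute)
    have "- f i = - g_o1 (i + k) / (real n ^ (i + k) * sqrt n)"
      unfolding f_def by simp
    also have "\<dots> \<le> - g_o1 (i + k) / D"
      using g D D_le[of i] by (intro divide_left_mono) auto
    also have "\<dots> \<le> C * rising_ratio (3/2) (k + i) / 24 ^ (i + k) / D"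
      using g D by (intro divide_right_mono) auto
    also have "\<dots> \<le> C * (rising_ratio (3/2) k * (3/2) ^ i) / 24 ^ (i + k) / D"
      using D rising_ratio_le_geometric[of "3/2" k i]
      by (intro divide_right_mono mult_left_mono) (simp_all add: C_def)
    also have "\<dots> = M * ((3/2) ^ i / 24 ^ i)"
      unfolding M_def by (simp add: power_add mult_ac)
    also have "(3/2) ^ i / 24 ^ i = (1/16 :: real) ^ i"
      by (simp flip: power_divide)
    finally show ?thesis .
  qed
  from suminf_bounds_geometric_majorant[OF nonpos this]
  show "summable f" "suminf f \<le> 0"
    and "- (48 / (5 * pi * sqrt 24)) * rising_ratio (3/2) k / (24 ^ k * (real n ^ k * sqrt n))
          \<le> suminf f"
    unfolding M_def C_def D_def by (simp_all add: field_simps)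
qed

lemma L3_lt: "L3 k < - (48 / (5 * pi * sqrt 24)) * rising_ratio (3/2) k / 24 ^ k"
proof -
  define r where "r = sqrt (real k + 1)"
  define E where "E = 19/10 * alpha * sinh alpha - 109/10 * cosh alpha * r - 23 / (10 * r)"
  have r: "1 \<le> r"
    unfolding r_def by simp
  have alpha: "0 < alpha" "alpha < 2/3"
    unfolding alpha_def using pi_less_4 by simp_all
  have "alpha * sinh alpha \<le> 2/3 * cosh alpha"
    using alpha sinh_less_cosh_real[of alpha] by (intro mult_mono) auto
  also have "\<dots> \<le> 2/3 * (cosh alpha * r)"
    using r cosh_real_ge_1[of alpha] by simp
  finally have sinh_term: "alpha * sinh alpha \<le> 2/3 * (cosh alpha * r)" .
  have "0 < 23 / (10 * r)"
    using r by simp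
  moreover have "E = 19/10 * (alpha * sinh alpha) - 109/10 * (cosh alpha * r) - 23 / (10 * r)"
    unfolding E_def by (simp add: mult.assoc)
  ultimately have "E < - (289/30) * (cosh alpha * r)"
    using sinh_term by linarith
  also have "\<dots> \<le> - (48/5) * r"
    using r cosh_real_ge_1[of alpha] by simp
  also have "\<dots> \<le> - (48 / (5 * pi)) * rising_ratio (3/2) k"
  proof -
    have "48 / (5 * pi) * rising_ratio (3/2) k \<le> 48/10 * (2 * r)"
      using pi_ge_two rising_ratio_pos[of "3/2" k] rising_ratio_three_halves_le_sqrt[of k]
      unfolding r_def by (intro mult_mono) (auto simp: field_simps)
    then show ?thesis by simp
  qed
  finally have "E / (24 ^ k * sqrt 24) < - (48 / (5 * pi)) * rising_ratio (3/2) k / (24 ^ k * sqrt 24)"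
    by (intro divide_strict_right_mono) auto
  moreover have "L3 k = E / (24 ^ k * sqrt 24)"
    using powr_minus_odd_half[of 24 k] unfolding L3_def E_def r_def by simp
  ultimately show ?thesis
    by (simp add: mult_ac)
qed

lemma U3_pos: "0 < U3 k"
  unfolding U3_def alpha_def by (simp add: add_nonneg_pos)

theorem mainTheorem18:
  fixes n k :: nat
  assumes "n \<ge> 1" and "k \<ge> 1"
  shows "summable (\<lambda>i. g_o1 (i + k) / real n powr ((2 * real (i + k) + 1) / 2))
    \<and> L3 k / real n powr ((2 * real k + 1) / 2)
        < (\<Sum>i. g_o1 (i + k) / real n powr ((2 * real (i + k) + 1) / 2))
    \<and> (\<Sum>i. g_o1 (i + k) / real n powr ((2 * real (i + k) + 1) / 2))
        < U3 k / real n powr ((2 * real k + 1) / 2)"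
proof -
  define N where "N = real n ^ k * sqrt n"
  have N: "0 < N" "real n powr ((2 * real k + 1) / 2) = N"
    unfolding N_def using assms(1) by (simp_all add: powr_odd_half)
  have "(\<lambda>i. g_o1 (i + k) / real n powr ((2 * real (i + k) + 1) / 2))
      = (\<lambda>i. g_o1 (i + k) / (real n ^ (i + k) * sqrt n))"
    using assms(1) powr_odd_half[of "real n"] by (simp del: of_nat_add)
  note tail = g_o1_tail_bounds[of n k, OF assms(1), folded this N_def]
  have "L3 k / N < - (48 / (5 * pi * sqrt 24)) * rising_ratio (3/2) k / (24 ^ k * N)"
    using divide_strict_right_mono[OF L3_lt[of k] N(1)] by (simp add: mult_ac)
  moreover have "0 < U3 k / N"
    using U3_pos N(1) by simp
  ultimately show ?thesis
    unfolding N(2) using tail by linarith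
qed

end
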